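(* Let $|\Phi^+\rangle=\frac1{\sqrt2}(|00\rangle+|11\rangle)$. For a POVM $\{\mathrm B'_b\}_{b=1}^m$ on $\mathbb C^2$ and $\eta\in[0,1]$ let its lossy version be $\{\eta\mathrm B'_1,\dots,\eta\mathrm B'_m,(1-\eta)I\}$ (the last element being the no-click outcome $\varnothing$). (1) If $\eta\le 1/4$, then the correlations $\langle\Phi^+|\mathrm A_{a|\boldsymbol x}\otimes\mathrm B_b|\Phi^+\rangle$, where Alice performs any projective qubit measurement $\mathrm A_{a|\boldsymbol x}=\frac12(I+a\,\boldsymbol x\cdot\boldsymbol\sigma)$ ($\boldsymbol x\in\mathbb R^3$ unit, $a=\pm1$) and Bob performs the lossy version of any finite-outcome POVM on $\mathbb C^2$, admit a single local hidden variable model (valid for all measurement choices of both parties). (2) If $\eta\le 1/\pi$, the same holds when Alice's measurements are restricted to the $X$–$Z$ plane, $\mathrm A_{a|\varphi}=\frac12(I+a(\cos\varphi Z+\sin\varphi X))$, $\varphi\in[0,2\pi)$.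
   Context: $\boldsymbol\sigma=(X,Y,Z)$ are the Pauli matrices. A local hidden variable model for a family of correlations $p(a,b|\mathrm{settings})$ consists of a probability space $(\Lambda,\mu)$ and measurable response functions $p_A(a|\text{Alice's setting},\lambda)$, $p_B(b|\text{Bob's setting},\lambda)$ with $p(a,b|\cdot)=\int p_A\,p_B\,d\mu$ for all settings and outcomes. *)

theory Defs
  imports "HOL-Analysis.Analysis" "HOL-Probability.Probability"
begin

type_synonym qmat = "complex^2^2"   (* operators on C^2, indices 1,2 *)
type_synonym qvec = "complex^2"

definition pauliX :: qmat where "pauliX = vector [vector [0, 1], vector [1, 0]]"
definition pauliY :: qmat where "pauliY = vector [vector [0, - \<i>], vector [\<i>, 0]]"
definition pauliZ :: qmat where "pauliZ = vector [vector [1, 0], vector [0, -1]]"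

definition kron :: "qmat \<Rightarrow> qmat \<Rightarrow> complex^(2\<times>2)^(2\<times>2)" where
  "kron A B = (\<chi> p q. A$(fst p)$(fst q) * B$(snd p)$(snd q))"

text \<open>|Phi+> = (|00> + |11>)/sqrt 2 (basis states |0>,|1> are indices 1,2).\<close>
definition phi_plus :: "complex^(2\<times>2)" where
  "phi_plus = (\<chi> p. if fst p = snd p then complex_of_real (1 / sqrt 2) else 0)"

definition braket :: "complex^'n \<Rightarrow> complex^'n \<Rightarrow> complex" where
  "braket u v = (\<Sum>i\<in>UNIV. cnj (u$i) * v$i)"

definition bell_corr :: "qmat \<Rightarrow> qmat \<Rightarrow> complex" where
  "bell_corr A B = braket phi_plus (kron A B *v phi_plus)"

definition qpsd :: "qmat \<Rightarrow> bool" where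
  "qpsd A \<longleftrightarrow> (\<forall>v::qvec. Im (braket v (A *v v)) = 0 \<and> 0 \<le> Re (braket v (A *v v)))"

definition is_povm :: "nat \<Rightarrow> (nat \<Rightarrow> qmat) \<Rightarrow> bool" where
  "is_povm m B \<longleftrightarrow> (\<forall>b<m. qpsd (B b)) \<and> (\<Sum>b<m. B b) = mat 1"

text \<open>Outcomes of the lossy version: Some b (click with outcome b), None (no click).\<close>
definition lossy_outcomes :: "nat \<Rightarrow> nat option set" where
  "lossy_outcomes m = insert None (Some ` {..<m})"

definition lossy :: "real \<Rightarrow> (nat \<Rightarrow> qmat) \<Rightarrow> nat option \<Rightarrow> qmat" where
  "lossy \<eta> B ob = (case ob of Some b \<Rightarrow> \<eta> *\<^sub>R B b | None \<Rightarrow> (1 - \<eta>) *\<^sub>R mat 1)"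

definition alice_proj :: "real^3 \<Rightarrow> real \<Rightarrow> qmat" where
  "alice_proj x a = (1/2) *\<^sub>R (mat 1 + a *\<^sub>R (x$1 *\<^sub>R pauliX + x$2 *\<^sub>R pauliY + x$3 *\<^sub>R pauliZ))"

definition alice_xz :: "real \<Rightarrow> real \<Rightarrow> qmat" where
  "alice_xz \<phi> a = (1/2) *\<^sub>R (mat 1 + a *\<^sub>R (cos \<phi> *\<^sub>R pauliZ + sin \<phi> *\<^sub>R pauliX))"

text \<open>The hidden variable ranges over the fixed type real^3 (with any sigma-algebra / probability
  measure); response functions are measurable and are probability distributions over outcomes.\<close>
definition lhv_lossy :: "'s set \<Rightarrow> ('s \<Rightarrow> real \<Rightarrow> qmat) \<Rightarrow> real \<Rightarrow> bool" where
  "lhv_lossy SA Aop \<eta> \<longleftrightarrow>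
    (\<exists>(M :: (real^3) measure) (pA :: 's \<Rightarrow> real \<Rightarrow> real^3 \<Rightarrow> real)
       (pB :: nat \<Rightarrow> (nat \<Rightarrow> qmat) \<Rightarrow> nat option \<Rightarrow> real^3 \<Rightarrow> real).
      prob_space M \<and>
      (\<forall>s\<in>SA. (\<forall>a\<in>{1, -1}. pA s a \<in> borel_measurable M) \<and>
         (\<forall>l\<in>space M. (\<forall>a\<in>{1, -1}. 0 \<le> pA s a l) \<and> pA s 1 l + pA s (-1) l = 1)) \<and>
      (\<forall>m B. is_povm m B \<longrightarrow>
         (\<forall>ob\<in>lossy_outcomes m. pB m B ob \<in> borel_measurable M) \<and>
         (\<forall>l\<in>space M. (\<forall>ob\<in>lossy_outcomes m. 0 \<le> pB m B ob l) \<and>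
                       (\<Sum>ob\<in>lossy_outcomes m. pB m B ob l) = 1)) \<and>
      (\<forall>s\<in>SA. \<forall>a\<in>{1, -1}. \<forall>m B. is_povm m B \<longrightarrow> (\<forall>ob\<in>lossy_outcomes m.
         bell_corr (Aop s a) (lossy \<eta> B ob) =
           complex_of_real (\<integral>l. pA s a l * pB m B ob l \<partial>M))))"

end

theory Submission
  imports Defs
begin

text \<open>The hidden variable is a point \<open>\<lambda>\<close> of the unit sphere, uniformly distributed (realised as
  \<open>sgn v\<close> for \<open>v\<close> uniform in the unit ball), and \<open>c = E \<bar>\<lambda>\<^sub>3\<bar>\<close>.  Alice answers deterministically
  \<open>sgn (x \<bullet> \<lambda>)\<close>.  Every element of a qubit POVM has the form \<open>B\<^sub>b = \<beta>\<^sub>b I + y\<^sub>b \<bullet> \<sigma>\<close> with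
  \<open>\<bar>y\<^sub>b\<bar> \<le> \<beta>\<^sub>b\<close>, \<open>\<Sum> \<beta>\<^sub>b = 1\<close> and \<open>\<Sum> y\<^sub>b = 0\<close>; Bob clicks with outcome \<open>b\<close> with probability
  \<open>\<eta> (\<beta>\<^sub>b - \<bar>y\<^sub>b\<bar>) + (\<eta> / c) (\<bar>y\<^sub>b \<bullet> \<lambda>\<bar> + y\<^sub>b \<bullet> \<lambda>)\<close> and otherwise reports no click.
  Rotation invariance gives \<open>E \<bar>y \<bullet> \<lambda>\<bar> = c \<bar>y\<bar>\<close> and \<open>E sgn (x \<bullet> \<lambda>) (y \<bullet> \<lambda>) = c (x \<bullet> y)\<close>,
  which reproduce the quantum correlations \<open>(\<beta> + a x \<bullet> y) / 2\<close>, while the total click probability is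
  at most \<open>\<eta> / c\<close>.  Since \<open>E \<lambda>\<^sub>3\<^sup>2 = 1/3\<close> we have \<open>c \<ge> 1/3\<close>, so the model works for
  \<open>\<eta> \<le> 1/3\<close>, which covers both \<open>1/4\<close> and \<open>1/\<pi>\<close> (in fact \<open>c = 1/2\<close>).\<close>

section \<open>The uniform distribution on the unit ball\<close>

definition unit_ball_measure :: "(real^'n::{finite,wellorder}) measure" where
  "unit_ball_measure = uniform_measure lborel (ball 0 1)"

lemma sets_unit_ball_measure [simp, measurable_cong]: "sets unit_ball_measure = sets borel"
  by (simp add: unit_ball_measure_def)

lemma space_unit_ball_measure [simp]: "space unit_ball_measure = UNIV"
  by (simp add: unit_ball_measure_def)

lemma prob_space_unit_ball_measure:
  "prob_space (unit_ball_measure :: (real^'n::{finite,wellorder}) measure)"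
  unfolding unit_ball_measure_def
proof (rule prob_space_uniform_measure)
  show "emeasure lborel (ball (0::real^'n::_) 1) \<noteq> \<infinity>"
    using emeasure_lborel_ball_finite by (simp add: less_top)
  have "measure lborel (ball (0::real^'n::_) 1) > 0"
    using content_ball_pos[of 1 "0::real^'n::_"] by simp
  then show "emeasure lborel (ball (0::real^'n::_) 1) \<noteq> 0"
    by (metis emeasure_lborel_ball_finite measure_def enn2real_positive_iff infinity_ennreal_def
        le_zero_eq not_gr_zero)
qed

interpretation unit_ball: prob_space "unit_ball_measure :: (real^'n::{finite,wellorder}) measure"
  by (rule prob_space_unit_ball_measure)

lemma measure_unit_ball_measure_UNIV [simp]: "measure unit_ball_measure UNIV = 1"
  using unit_ball.prob_space by simp

lemma orthogonal_transformation_borel_measurable: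
  fixes f :: "'a::euclidean_space \<Rightarrow> 'a"
  shows "orthogonal_transformation f \<Longrightarrow> f \<in> borel_measurable borel"
  by (meson borel_measurable_continuous_onI linear_conv_bounded_linear linear_continuous_on
      orthogonal_transformation_linear)

lemma emeasure_lborel_orthogonal_vimage:
  fixes f :: "real^'n::{finite,wellorder} \<Rightarrow> real^'n::_"
  assumes f: "orthogonal_transformation f" and S: "S \<in> sets borel" and "bounded S"
  shows "emeasure lborel (f -` S) = emeasure lborel S"
proof -
  have "f -` S \<in> sets borel"
    using orthogonal_transformation_borel_measurable[OF f] S by (simp add: measurable_sets_borel)
  moreover have "bounded (f -` S)"
    using \<open>bounded S\<close> orthogonal_transformation_norm[OF f] unfolding bounded_iff by (metis vimageE)
  ultimately have "f -` S \<in> lmeasurable"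
    by (simp add: bounded_set_imp_lmeasurable)
  moreover have "S \<in> lmeasurable"
    using S \<open>bounded S\<close> by (simp add: bounded_set_imp_lmeasurable)
  moreover have "measure lebesgue S = measure lebesgue (f -` S)"
    using measure_orthogonal_image[OF f \<open>f -` S \<in> lmeasurable\<close>] orthogonal_transformation_surj[OF f]
    by (simp add: surj_image_vimage_eq)
  moreover have "emeasure lborel S = emeasure lebesgue S"
    and "emeasure lborel (f -` S) = emeasure lebesgue (f -` S)"
    using S \<open>f -` S \<in> sets borel\<close> by simp_all
  ultimately show ?thesis
    by (metis emeasure_eq_measure2)
qed

lemma distr_unit_ball_measure_orthogonal:
  fixes f :: "real^'n::{finite,wellorder} \<Rightarrow> real^'n::_"
  assumes f: "orthogonal_transformation f"
  shows "distr unit_ball_measure borel f = unit_ball_measure"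
proof (rule measure_eqI)
  fix A assume "A \<in> sets (distr unit_ball_measure borel f)"
  then have A: "A \<in> sets borel" by simp
  have f_meas: "f \<in> borel_measurable borel"
    by (rule orthogonal_transformation_borel_measurable[OF f])
  have "ball 0 1 \<inter> f -` A = f -` (ball 0 1 \<inter> A)"
    using orthogonal_transformation_norm[OF f] by auto
  then have "emeasure (distr unit_ball_measure borel f) A
      = emeasure lborel (f -` (ball 0 1 \<inter> A)) / emeasure lborel (ball (0::real^'n::_) 1)"
    using A f_meas unfolding unit_ball_measure_def
    by (simp add: emeasure_distr emeasure_uniform_measure measurable_sets_borel)
  also have "\<dots> = emeasure unit_ball_measure A"
    using A by (subst emeasure_lborel_orthogonal_vimage[OF f]) (auto simp: unit_ball_measure_def)
  finally show "emeasure (distr unit_ball_measure borel f) A = emeasure unit_ball_measure A" .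
qed simp

lemma integral_unit_ball_measure_orthogonal:
  fixes f :: "real^'n::{finite,wellorder} \<Rightarrow> real^'n::_" and h :: "real^'n::_ \<Rightarrow> real"
  assumes f: "orthogonal_transformation f" and h: "h \<in> borel_measurable borel"
  shows "(\<integral>v. h (f v) \<partial>unit_ball_measure) = (\<integral>v. h v \<partial>unit_ball_measure)"
  using integral_distr[of f unit_ball_measure borel h] orthogonal_transformation_borel_measurable[OF f] h
  by (simp add: distr_unit_ball_measure_orthogonal[OF f])

lemma integral_unit_ball_measure_antisymmetric:
  fixes f :: "real^'n::{finite,wellorder} \<Rightarrow> real^'n::_" and h :: "real^'n::_ \<Rightarrow> real"
  assumes "orthogonal_transformation f" and "h \<in> borel_measurable borel"
    and "\<And>v. h (f v) = - h v"
  shows "(\<integral>v. h v \<partial>unit_ball_measure) = 0"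
  using integral_unit_ball_measure_orthogonal[OF assms(1,2)] assms(3) by simp

lemma integral_unit_ball_measure_odd:
  fixes h :: "real^'n::{finite,wellorder} \<Rightarrow> real"
  assumes "h \<in> borel_measurable borel" and "\<And>v. h (- v) = - h v"
  shows "(\<integral>v. h v \<partial>unit_ball_measure) = 0"
  using integral_unit_ball_measure_antisymmetric[of uminus h] orthogonal_transformation_neg[of id] assms
  by (simp add: id_def)

lemma orthogonal_transformation_sgn: "orthogonal_transformation f \<Longrightarrow> sgn (f v) = f (sgn v)"
  by (simp add: sgn_div_norm orthogonal_transformation_scaleR orthogonal_transformation_norm)

lemma integral_unit_ball_measure_inner_sgn_unit:
  fixes u w :: "real^'n::{finite,wellorder}" and \<phi> :: "real \<Rightarrow> real"
  assumes "norm u = 1" "norm w = 1" and \<phi>: "\<phi> \<in> borel_measurable borel"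
  shows "(\<integral>v. \<phi> (u \<bullet> sgn v) \<partial>unit_ball_measure) = (\<integral>v. \<phi> (w \<bullet> sgn v) \<partial>unit_ball_measure)"
proof -
  obtain f where f: "orthogonal_transformation f" "f u = w"
    using orthogonal_transformation_exists_1[OF assms(1,2)] by metis
  have "u \<bullet> sgn v = w \<bullet> sgn (f v)" for v
    using f orthogonal_transformation_sgn orthogonal_transformation_def by metis
  then show ?thesis
    using integral_unit_ball_measure_orthogonal[OF f(1), of "\<lambda>v. \<phi> (w \<bullet> sgn v)"] \<phi> by simp
qed

lemma AE_unit_ball_measure_nonzero: "AE v in unit_ball_measure. v \<noteq> 0"
proof -
  have "emeasure unit_ball_measure {0} = 0"
    unfolding unit_ball_measure_def by (subst emeasure_uniform_measure) (auto simp: Int_absorb1)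
  then show ?thesis by (intro AE_I[of _ _ "{0}"]) auto
qed

lemma integrable_unit_ball_measure_bounded:
  fixes h :: "real^'n::{finite,wellorder} \<Rightarrow> real"
  assumes "h \<in> borel_measurable borel" and "\<And>v. \<bar>h v\<bar> \<le> C"
  shows "integrable unit_ball_measure h"
  using assms by (intro unit_ball.integrable_const_bound[of _ C]) auto

section \<open>Moments of the uniform distribution on the unit sphere\<close>

definition mean_abs_coord :: real where
  "mean_abs_coord = (\<integral>v. \<bar>axis 3 1 \<bullet> sgn v\<bar> \<partial>(unit_ball_measure :: (real^3) measure))"

lemma abs_inner_sgn_le: "\<bar>u \<bullet> sgn v\<bar> \<le> norm u"
  for u v :: "'a::real_inner"
  using Cauchy_Schwarz_ineq2[of u "sgn v"] by (simp add: norm_sgn split: if_split_asm)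

lemma integrable_inner_sgn [simp]:
  fixes x y :: "real^3"
  shows "integrable unit_ball_measure (\<lambda>v. y \<bullet> sgn v)"
    and "integrable unit_ball_measure (\<lambda>v. \<bar>y \<bullet> sgn v\<bar>)"
    and "integrable unit_ball_measure (\<lambda>v. sgn (x \<bullet> sgn v))"
    and "integrable unit_ball_measure (\<lambda>v. sgn (x \<bullet> sgn v) * (y \<bullet> sgn v))"
    and "integrable unit_ball_measure (\<lambda>v. sgn (x \<bullet> sgn v) * \<bar>y \<bullet> sgn v\<bar>)"
proof -
  have bound: "\<bar>sgn t * s\<bar> \<le> c" if "\<bar>s\<bar> \<le> c" for s t c :: real
    using that abs_ge_zero[of s] by (auto simp: abs_mult abs_sgn_eq)
  show "integrable unit_ball_measure (\<lambda>v. y \<bullet> sgn v)"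
    and "integrable unit_ball_measure (\<lambda>v. \<bar>y \<bullet> sgn v\<bar>)"
    and "integrable unit_ball_measure (\<lambda>v. sgn (x \<bullet> sgn v) * (y \<bullet> sgn v))"
    and "integrable unit_ball_measure (\<lambda>v. sgn (x \<bullet> sgn v) * \<bar>y \<bullet> sgn v\<bar>)"
    using abs_inner_sgn_le[of y]
    by (auto intro!: integrable_unit_ball_measure_bounded[where C = "norm y"] bound)
  show "integrable unit_ball_measure (\<lambda>v. sgn (x \<bullet> sgn v))"
    by (auto intro!: integrable_unit_ball_measure_bounded[where C = 1] simp: abs_sgn_eq)
qed

lemma integral_inner_sgn: "(\<integral>v. y \<bullet> sgn v \<partial>unit_ball_measure) = 0"
  for y :: "real^3"
  by (rule integral_unit_ball_measure_odd) (auto simp: sgn_minus)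

lemma integral_sgn_inner_sgn: "(\<integral>v. sgn (x \<bullet> sgn v) \<partial>unit_ball_measure) = 0"
  for x :: "real^3"
  by (rule integral_unit_ball_measure_odd) (auto simp: sgn_minus)

lemma integral_sgn_inner_sgn_mult_abs:
  "(\<integral>v. sgn (x \<bullet> sgn v) * \<bar>y \<bullet> sgn v\<bar> \<partial>unit_ball_measure) = 0"
  for x y :: "real^3"
  by (rule integral_unit_ball_measure_odd) (auto simp: sgn_minus)

lemma integral_abs_inner_sgn_unit:
  "norm u = 1 \<Longrightarrow> (\<integral>v. \<bar>u \<bullet> sgn v\<bar> \<partial>unit_ball_measure) = mean_abs_coord"
  for u :: "real^3"
  unfolding mean_abs_coord_def by (rule integral_unit_ball_measure_inner_sgn_unit) auto

lemma integral_abs_inner_sgn: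
  "(\<integral>v. \<bar>y \<bullet> sgn v\<bar> \<partial>unit_ball_measure) = mean_abs_coord * norm y"
  for y :: "real^3"
proof (cases "y = 0")
  case False
  have "\<bar>y \<bullet> sgn v\<bar> = norm y * \<bar>sgn y \<bullet> sgn v\<bar>" for v
    using False by (simp add: sgn_div_norm abs_mult)
  then show ?thesis
    using integral_abs_inner_sgn_unit[of "sgn y"] False by (simp add: norm_sgn)
qed simp

lemma mean_abs_coord_ge: "mean_abs_coord \<ge> 1/3"
proof -
  let ?q = "\<lambda>i (v::real^3). (axis i 1 \<bullet> sgn v)\<^sup>2"
  have q_bound: "\<bar>?q i v\<bar> \<le> 1" for i v
    using abs_inner_sgn_le[of "axis i 1" v] by (simp add: abs_square_le_1)
  have q_int: "integrable unit_ball_measure (?q i)" for i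
    using q_bound by (intro integrable_unit_ball_measure_bounded[where C = 1]) auto
  have q_eq: "(\<integral>v. ?q i v \<partial>unit_ball_measure) = (\<integral>v. ?q 3 v \<partial>unit_ball_measure)" for i
    by (rule integral_unit_ball_measure_inner_sgn_unit[where \<phi> = "\<lambda>t. t\<^sup>2"]) auto
  have sum_q: "?q 1 v + ?q 2 v + ?q 3 v = sgn v \<bullet> sgn v" for v
    by (simp add: inner_vec_def sum_3 power2_eq_square axis_def)
  have "AE v in unit_ball_measure. ?q 1 v + ?q 2 v + ?q 3 v = 1"
    by (rule eventually_mono[OF AE_unit_ball_measure_nonzero])
      (simp add: sum_q norm_sgn flip: power2_norm_eq_inner)
  then have "(\<integral>v. ?q 1 v + ?q 2 v + ?q 3 v \<partial>unit_ball_measure) = (\<integral>v. 1 \<partial>(unit_ball_measure :: (real^3) measure))"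
    by (intro integral_cong_AE) auto
  then have second_moment: "(\<integral>v. ?q 3 v \<partial>unit_ball_measure) = 1/3"
    using q_int q_eq[of 1] q_eq[of 2] by simp
  have "(\<integral>v. ?q 3 v \<partial>unit_ball_measure) \<le> mean_abs_coord"
    unfolding mean_abs_coord_def
  proof (intro integral_mono)
    fix v :: "real^3"
    have "\<bar>axis 3 1 \<bullet> sgn v\<bar> \<le> 1"
      using abs_inner_sgn_le[of "axis 3 1" v] by simp
    then show "?q 3 v \<le> \<bar>axis 3 1 \<bullet> sgn v\<bar>"
      by (metis abs_ge_zero mult_left_le power2_abs power2_eq_square)
  qed (use q_int in auto)
  then show ?thesis using second_moment by simp
qed

lemma mean_abs_coord_pos: "mean_abs_coord > 0"
  using mean_abs_coord_ge by simp

lemma mean_abs_coord_le: "mean_abs_coord \<le> 1"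
proof -
  have "mean_abs_coord \<le> (\<integral>v. 1 \<partial>(unit_ball_measure :: (real^3) measure))"
    unfolding mean_abs_coord_def
    using abs_inner_sgn_le[of "axis 3 1 :: real^3"] by (intro integral_mono) auto
  then show ?thesis by simp
qed

lemma orthogonal_transformation_reflection:
  fixes z :: "'a::real_inner"
  assumes "z \<noteq> 0"
  shows "orthogonal_transformation (\<lambda>w. w - (2 * (z \<bullet> w) / (z \<bullet> z)) *\<^sub>R z)"
  unfolding orthogonal_transformation_def
proof
  show "linear (\<lambda>w. w - (2 * (z \<bullet> w) / (z \<bullet> z)) *\<^sub>R z)"
    by (rule linearI) (auto simp: inner_add_right add_divide_distrib scaleR_add_left algebra_simps)
  show "\<forall>v w. (v - (2 * (z \<bullet> v) / (z \<bullet> z)) *\<^sub>R z) \<bullet> (w - (2 * (z \<bullet> w) / (z \<bullet> z)) *\<^sub>R z) = v \<bullet> w"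
    using assms by (auto simp: inner_diff_left inner_diff_right inner_commute field_simps)
qed

text \<open>Split \<open>y\<close> into its components along \<open>x\<close> and orthogonal to \<open>x\<close>; the reflection in the
  orthogonal component \<open>z\<close> fixes \<open>x\<close> and reverses \<open>z\<close>, so that part integrates to zero.\<close>

lemma integral_sgn_inner_sgn_mult_inner:
  fixes x y :: "real^3"
  assumes x: "norm x = 1"
  shows "(\<integral>v. sgn (x \<bullet> sgn v) * (y \<bullet> sgn v) \<partial>unit_ball_measure) = mean_abs_coord * (x \<bullet> y)"
proof -
  define z where "z = y - (x \<bullet> y) *\<^sub>R x"
  have "x \<bullet> x = 1" using x by (simp flip: power2_norm_eq_inner)
  then have xz: "x \<bullet> z = 0" by (simp add: z_def inner_diff_right)
  have decompose: "sgn (x \<bullet> sgn v) * (y \<bullet> sgn v)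
      = (x \<bullet> y) * \<bar>x \<bullet> sgn v\<bar> + sgn (x \<bullet> sgn v) * (z \<bullet> sgn v)" for v
  proof -
    have "t * sgn t = \<bar>t\<bar>" for t :: real
      by (simp add: sgn_real_def)
    then show ?thesis
      by (simp add: z_def inner_diff_left algebra_simps)
  qed
  have z_part: "(\<integral>v. sgn (x \<bullet> sgn v) * (z \<bullet> sgn v) \<partial>unit_ball_measure) = 0"
  proof (cases "z = 0")
    case False
    let ?R = "\<lambda>w. w - (2 * (z \<bullet> w) / (z \<bullet> z)) *\<^sub>R z"
    have R: "orthogonal_transformation ?R"
      by (rule orthogonal_transformation_reflection[OF False])
    note orthogonal_transformation_sgn[OF R]
    moreover have "x \<bullet> ?R w = x \<bullet> w" and "z \<bullet> ?R w = - (z \<bullet> w)" for w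
      using xz False by (simp_all add: inner_diff_right)
    ultimately show ?thesis
      by (intro integral_unit_ball_measure_antisymmetric[OF R]) auto
  qed simp
  show ?thesis
    using z_part integral_abs_inner_sgn_unit[OF x] by (simp add: decompose)
qed

section \<open>Qubit operators in the Bloch parametrisation\<close>

definition hermitian2 :: "qmat \<Rightarrow> bool" where
  "hermitian2 M \<longleftrightarrow> M$2$1 = cnj (M$1$2) \<and> Im (M$1$1) = 0 \<and> Im (M$2$2) = 0"

definition bloch_scalar :: "qmat \<Rightarrow> real" where
  "bloch_scalar M = Re (M$1$1 + M$2$2) / 2"

text \<open>For hermitian \<open>M = \<beta> I + y \<bullet> \<sigma>\<close> this is \<open>(y\<^sub>1, - y\<^sub>2, y\<^sub>3)\<close>, the Bloch vector of the transpose
  of \<open>M\<close>: Bob's operator enters \<open>\<langle>\<Phi>\<^sup>+| A \<otimes> B |\<Phi>\<^sup>+\<rangle> = tr (A B\<^sup>T) / 2\<close> through its transpose.\<close>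

definition bloch_vector :: "qmat \<Rightarrow> real^3" where
  "bloch_vector M = vector [Re (M$1$2), Im (M$1$2), Re (M$1$1 - M$2$2) / 2]"

lemma sum_UNIV_2_times_2:
  "(\<Sum>p\<in>(UNIV::(2\<times>2) set). f p) = f (1,1) + f (1,2) + f (2,1) + f (2,2)"
proof -
  have "(UNIV::(2\<times>2) set) = UNIV \<times> UNIV" by simp
  then have "(\<Sum>p\<in>(UNIV::(2\<times>2) set). f p) = (\<Sum>i\<in>UNIV. \<Sum>j\<in>UNIV. f (i,j))"
    by (simp add: sum.cartesian_product)
  then show ?thesis by (simp add: sum_2 add.assoc)
qed

lemma bell_corr_eq:
  "bell_corr A B = (A$1$1 * B$1$1 + A$1$2 * B$1$2 + A$2$1 * B$2$1 + A$2$2 * B$2$2) / 2"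
proof -
  have "cnj (complex_of_real (1 / sqrt 2)) * complex_of_real (1 / sqrt 2) = 1/2"
    by (simp flip: of_real_mult)
  then show ?thesis
    unfolding bell_corr_def braket_def kron_def phi_plus_def matrix_vector_mult_def
    by (simp add: sum_UNIV_2_times_2 algebra_simps add_divide_distrib)
qed

lemma alice_proj_entries:
  "alice_proj x a $1$1 = complex_of_real ((1 + a * x$3) / 2)"
  "alice_proj x a $1$2 = complex_of_real a * (complex_of_real (x$1) - \<i> * complex_of_real (x$2)) / 2"
  "alice_proj x a $2$1 = complex_of_real a * (complex_of_real (x$1) + \<i> * complex_of_real (x$2)) / 2"
  "alice_proj x a $2$2 = complex_of_real ((1 - a * x$3) / 2)"
  by (simp_all add: alice_proj_def pauliX_def pauliY_def pauliZ_def mat_def vector_scaleR_component;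
      simp add: complex_eq_iff algebra_simps)+

lemma bell_corr_alice_proj:
  assumes "hermitian2 B"
  shows "bell_corr (alice_proj x a) B = complex_of_real ((bloch_scalar B + a * (x \<bullet> bloch_vector B)) / 2)"
proof -
  obtain p r q where B: "B$1$1 = complex_of_real p" "B$2$2 = complex_of_real r"
    "B$1$2 = q" "B$2$1 = cnj q"
  proof -
    have "B$1$1 = complex_of_real (Re (B$1$1))" "B$2$2 = complex_of_real (Re (B$2$2))"
      using assms unfolding hermitian2_def by (simp_all add: complex_eq_iff)
    then show ?thesis
      using that assms unfolding hermitian2_def by blast
  qed
  show ?thesis
    unfolding bell_corr_eq alice_proj_entries bloch_scalar_def bloch_vector_def B
    by (simp add: complex_eq_iff inner_vec_def sum_3 algebra_simps) (simp add: field_simps)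
qed

lemma alice_xz_eq_alice_proj: "alice_xz \<phi> a = alice_proj (vector [sin \<phi>, 0, cos \<phi>]) a"
  by (simp add: alice_xz_def alice_proj_def algebra_simps)

lemma norm_vector_sin_0_cos: "norm (vector [sin \<phi>, 0, cos \<phi>] :: real^3) = 1"
  by (simp add: norm_vec_def L2_set_def sum_3)

lemma braket_vector_2:
  "braket (vector [\<alpha>, \<beta>] :: qvec) ((M :: qmat) *v vector [\<alpha>, \<beta>]) =
     cnj \<alpha> * (M$1$1 * \<alpha> + M$1$2 * \<beta>) + cnj \<beta> * (M$2$1 * \<alpha> + M$2$2 * \<beta>)"
  by (simp add: braket_def matrix_vector_mult_def sum_2)

lemma qpsd_imp_hermitian2:
  assumes "qpsd M"
  shows "hermitian2 M"
proof -
  have Im0: "Im (braket v (M *v v)) = 0" for v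
    using assms unfolding qpsd_def by blast
  have "Im (M$1$1) = 0" "Im (M$2$2) = 0"
    using Im0[of "vector [1, 0]"] Im0[of "vector [0, 1]"] by (simp_all add: braket_vector_2)
  moreover have "Im (M$1$2) + Im (M$2$1) = 0" "Re (M$1$2) - Re (M$2$1) = 0"
    using Im0[of "vector [1, 1]"] Im0[of "vector [1, \<i>]"] calculation
    by (simp_all add: braket_vector_2 algebra_simps)
  ultimately show ?thesis
    unfolding hermitian2_def by (simp add: complex_eq_iff)
qed

lemma qpsd_entries:
  assumes "qpsd M"
  shows "0 \<le> Re (M$1$1)" and "0 \<le> Re (M$2$2)"
    and "(Re (M$1$2))\<^sup>2 + (Im (M$1$2))\<^sup>2 \<le> Re (M$1$1) * Re (M$2$2)"
proof -
  define p r q where "p = Re (M$1$1)" and "r = Re (M$2$2)" and "q = M$1$2"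
  have M: "M$1$1 = complex_of_real p" "M$2$2 = complex_of_real r" "M$2$1 = cnj q"
    using qpsd_imp_hermitian2[OF assms] unfolding hermitian2_def p_def r_def q_def
    by (simp_all add: complex_eq_iff)
  have nonneg: "0 \<le> Re (braket v (M *v v))" for v
    using assms unfolding qpsd_def by blast
  have form: "Re (braket (vector [\<alpha>, \<beta>]) (M *v vector [\<alpha>, \<beta>])) =
      p * ((Re \<alpha>)\<^sup>2 + (Im \<alpha>)\<^sup>2) + r * ((Re \<beta>)\<^sup>2 + (Im \<beta>)\<^sup>2) + 2 * Re (cnj \<alpha> * q * \<beta>)" for \<alpha> \<beta>
    unfolding braket_vector_2 M q_def[symmetric] by (simp add: algebra_simps power2_eq_square)
  show p0: "0 \<le> Re (M$1$1)" and r0: "0 \<le> Re (M$2$2)"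
    using nonneg[of "vector [1, 0]"] nonneg[of "vector [0, 1]"] form[of 1 0] form[of 0 1]
    by (simp_all add: p_def r_def)
  show "(Re (M$1$2))\<^sup>2 + (Im (M$1$2))\<^sup>2 \<le> Re (M$1$1) * Re (M$2$2)"
  proof (cases "p > 0")
    case True
    have "0 \<le> p * (p * r - ((Re q)\<^sup>2 + (Im q)\<^sup>2))"
      using nonneg[of "vector [q, - complex_of_real p]"] form[of q "- complex_of_real p"]
      by (simp add: algebra_simps power2_eq_square)
    then show ?thesis
      using True by (simp add: zero_le_mult_iff p_def r_def q_def)
  next
    case False
    then have "p = 0" using p0 by (simp add: p_def)
    have "0 \<le> - (r + 2) * ((Re q)\<^sup>2 + (Im q)\<^sup>2)"
      using nonneg[of "vector [complex_of_real (1 + r), - cnj q]"] form[of "complex_of_real (1 + r)" "- cnj q"] \<open>p = 0\<close>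
      by (simp add: algebra_simps power2_eq_square)
    moreover have "0 \<le> r" using r0 by (simp add: r_def)
    ultimately have "(Re q)\<^sup>2 + (Im q)\<^sup>2 \<le> 0"
      by (auto simp: zero_le_mult_iff)
    then show ?thesis
      using \<open>p = 0\<close> by (simp add: p_def q_def)
  qed
qed

lemma norm_bloch_vector_le:
  assumes "qpsd M"
  shows "norm (bloch_vector M) \<le> bloch_scalar M"
proof -
  define p r q where "p = Re (M$1$1)" and "r = Re (M$2$2)" and "q = M$1$2"
  have "(norm (bloch_vector M))\<^sup>2 = (Re q)\<^sup>2 + (Im q)\<^sup>2 + ((p - r) / 2)\<^sup>2"
    by (simp add: bloch_vector_def norm_vec_def L2_set_def sum_3 p_def r_def q_def)
  also have "\<dots> \<le> ((p + r) / 2)\<^sup>2"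
    using qpsd_entries(3)[OF assms] by (simp add: p_def r_def q_def power2_eq_square field_simps)
  finally show ?thesis
    using qpsd_entries(1,2)[OF assms]
    by (simp add: bloch_scalar_def p_def r_def power2_le_iff_abs_le)
qed

lemma hermitian2_scaleR: "hermitian2 M \<Longrightarrow> hermitian2 (c *\<^sub>R M)"
  by (simp add: hermitian2_def vector_scaleR_component)

lemma hermitian2_mat_1: "hermitian2 (mat 1)"
  by (simp add: hermitian2_def mat_def)

lemma bloch_scalar_scaleR [simp]: "bloch_scalar (c *\<^sub>R M) = c * bloch_scalar M"
  by (simp add: bloch_scalar_def vector_scaleR_component field_simps)

lemma bloch_vector_scaleR [simp]: "bloch_vector (c *\<^sub>R M) = c *\<^sub>R bloch_vector M"
  by (simp add: bloch_vector_def vector_scaleR_component vec_eq_iff forall_3 field_simps)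

lemma bloch_scalar_mat_1 [simp]: "bloch_scalar (mat 1) = 1"
  by (simp add: bloch_scalar_def mat_def)

lemma bloch_vector_mat_1 [simp]: "bloch_vector (mat 1) = 0"
  by (simp add: bloch_vector_def mat_def vec_eq_iff forall_3)

lemma bloch_scalar_sum: "bloch_scalar (\<Sum>b\<in>A. B b) = (\<Sum>b\<in>A. bloch_scalar (B b))"
  by (induction A rule: infinite_finite_induct) (auto simp: bloch_scalar_def field_simps)

lemma bloch_vector_sum: "bloch_vector (\<Sum>b\<in>A. B b) = (\<Sum>b\<in>A. bloch_vector (B b))"
  by (induction A rule: infinite_finite_induct)
    (auto simp: bloch_vector_def vec_eq_iff forall_3 field_simps)

lemma is_povm_bloch_sums:
  assumes "is_povm m B"
  shows "(\<Sum>b<m. bloch_scalar (B b)) = 1" and "(\<Sum>b<m. bloch_vector (B b)) = 0"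
  using assms bloch_scalar_sum[of B "{..<m}"] bloch_vector_sum[of B "{..<m}"]
  unfolding is_povm_def by auto

lemma hermitian2_lossy:
  assumes "is_povm m B" and "ob \<in> lossy_outcomes m"
  shows "hermitian2 (lossy \<eta> B ob)"
  using assms qpsd_imp_hermitian2
  by (auto simp: lossy_def lossy_outcomes_def is_povm_def hermitian2_scaleR hermitian2_mat_1)

section \<open>The local hidden variable model\<close>

definition alice_response :: "real^3 \<Rightarrow> real \<Rightarrow> real^3 \<Rightarrow> real" where
  "alice_response x a v = (1 + a * sgn (x \<bullet> sgn v)) / 2"

definition click_prob :: "real \<Rightarrow> real \<Rightarrow> real^3 \<Rightarrow> real^3 \<Rightarrow> real" where
  "click_prob \<eta> \<beta> y v = \<eta> * (\<beta> - norm y) + \<eta> / mean_abs_coord * (\<bar>y \<bullet> sgn v\<bar> + y \<bullet> sgn v)"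

definition bob_response :: "real \<Rightarrow> nat \<Rightarrow> (nat \<Rightarrow> qmat) \<Rightarrow> nat option \<Rightarrow> real^3 \<Rightarrow> real" where
  "bob_response \<eta> m B ob v =
    (let click = (\<lambda>b. click_prob \<eta> (bloch_scalar (B b)) (bloch_vector (B b)) v)
     in case ob of Some b \<Rightarrow> click b | None \<Rightarrow> 1 - (\<Sum>b<m. click b))"

lemma click_prob_nonneg:
  assumes "0 \<le> \<eta>" and "norm y \<le> \<beta>"
  shows "0 \<le> click_prob \<eta> \<beta> y v"
proof -
  have "0 \<le> \<eta> / mean_abs_coord * (\<bar>y \<bullet> sgn v\<bar> + y \<bullet> sgn v)"
    using assms(1) mean_abs_coord_pos by (intro mult_nonneg_nonneg) (auto simp: abs_if)
  then show ?thesis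
    using assms unfolding click_prob_def by simp
qed

lemma sum_click_prob_le_1:
  assumes "0 \<le> \<eta>" and "\<eta> \<le> mean_abs_coord" and P: "is_povm m B"
  shows "(\<Sum>b<m. click_prob \<eta> (bloch_scalar (B b)) (bloch_vector (B b)) v) \<le> 1"
proof -
  define N where "N = (\<Sum>b<m. norm (bloch_vector (B b)))"
  define S where "S = (\<Sum>b<m. \<bar>bloch_vector (B b) \<bullet> sgn v\<bar>)"
  note sums = is_povm_bloch_sums[OF P]
  have "N \<le> 1"
    using P norm_bloch_vector_le sums(1) unfolding N_def is_povm_def by (metis lessThan_iff sum_mono)
  have "S \<le> N"
    unfolding S_def N_def by (intro sum_mono) (rule abs_inner_sgn_le)
  have "(\<Sum>b<m. bloch_vector (B b) \<bullet> sgn v) = 0"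
    using sums(2) by (simp flip: inner_sum_left)
  then have "(\<Sum>b<m. click_prob \<eta> (bloch_scalar (B b)) (bloch_vector (B b)) v)
      = \<eta> * (1 - N) + \<eta> / mean_abs_coord * S"
    unfolding click_prob_def N_def S_def using sums(1)
    by (simp add: sum.distrib sum_subtractf right_diff_distrib flip: sum_distrib_left)
      (simp add: sum.distrib flip: sum_divide_distrib sum_distrib_left)
  also have "\<dots> \<le> \<eta> / mean_abs_coord * (1 - N) + \<eta> / mean_abs_coord * N"
    using \<open>N \<le> 1\<close> \<open>S \<le> N\<close> assms(1) mean_abs_coord_pos mean_abs_coord_le
    by (intro add_mono mult_right_mono mult_left_mono) (auto simp: le_divide_eq mult_left_le)
  also have "\<dots> \<le> 1"
    using assms(2) mean_abs_coord_pos by (simp add: field_simps)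
  finally show ?thesis .
qed

lemma alice_response_measurable [measurable]:
  "alice_response x a \<in> borel_measurable unit_ball_measure"
  unfolding alice_response_def by measurable

lemma click_prob_measurable [measurable]:
  "click_prob \<eta> \<beta> y \<in> borel_measurable unit_ball_measure"
  unfolding click_prob_def by measurable

lemma bob_response_measurable [measurable]:
  "bob_response \<eta> m B ob \<in> borel_measurable unit_ball_measure"
  by (cases ob) (simp_all add: bob_response_def[abs_def] Let_def)

lemma integral_alice_response: "(\<integral>v. alice_response x a v \<partial>unit_ball_measure) = 1/2"
  by (simp add: alice_response_def add_divide_distrib integral_sgn_inner_sgn)

lemma alice_response_mult_click_prob:
  "alice_response x a v * click_prob \<eta> \<beta> y v
    = \<eta> * (\<beta> - norm y) / 2 + \<eta> / mean_abs_coord / 2 * \<bar>y \<bullet> sgn v\<bar>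
      + \<eta> / mean_abs_coord / 2 * (y \<bullet> sgn v) + a * (\<eta> * (\<beta> - norm y)) / 2 * sgn (x \<bullet> sgn v)
      + a * (\<eta> / mean_abs_coord) / 2 * (sgn (x \<bullet> sgn v) * \<bar>y \<bullet> sgn v\<bar>)
      + a * (\<eta> / mean_abs_coord) / 2 * (sgn (x \<bullet> sgn v) * (y \<bullet> sgn v))"
proof -
  have "(1 + a * s) / 2 * (K + k * (u + t))
      = K / 2 + k / 2 * u + k / 2 * t + a * K / 2 * s + a * k / 2 * (s * u) + a * k / 2 * (s * t)"
    for K k s t u :: real
    by (simp add: field_simps)
  then show ?thesis
    unfolding alice_response_def click_prob_def .
qed

lemma integrable_alice_response [simp]: "integrable unit_ball_measure (alice_response x a)"
  by (rule integrable_unit_ball_measure_bounded[where C = "(1 + \<bar>a\<bar>) / 2"])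
    (auto simp: alice_response_def sgn_real_def abs_mult)

lemma integrable_alice_response_mult_click_prob [simp]:
  "integrable unit_ball_measure (\<lambda>v. alice_response x a v * click_prob \<eta> \<beta> y v)"
  by (simp add: alice_response_mult_click_prob)

lemma integral_alice_response_mult_click_prob:
  assumes "norm x = 1"
  shows "(\<integral>v. alice_response x a v * click_prob \<eta> \<beta> y v \<partial>unit_ball_measure)
    = (\<eta> * \<beta> + a * (x \<bullet> \<eta> *\<^sub>R y)) / 2"
  using mean_abs_coord_pos
  by (simp add: alice_response_mult_click_prob integral_abs_inner_sgn integral_inner_sgn
      integral_sgn_inner_sgn integral_sgn_inner_sgn_mult_abs integral_sgn_inner_sgn_mult_inner[OF assms])
    (simp add: field_simps)

lemma sum_lossy_outcomes:
  "(\<Sum>ob\<in>lossy_outcomes m. f ob) = f None + (\<Sum>b<m. f (Some b))"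
  unfolding lossy_outcomes_def by (simp add: sum.reindex)

lemma bob_response_nonneg:
  assumes "0 \<le> \<eta>" "\<eta> \<le> mean_abs_coord" "is_povm m B" and "ob \<in> lossy_outcomes m"
  shows "0 \<le> bob_response \<eta> m B ob v"
proof (cases ob)
  case None
  then show ?thesis
    using sum_click_prob_le_1[OF assms(1-3)] by (simp add: bob_response_def)
next
  case (Some b)
  then have "norm (bloch_vector (B b)) \<le> bloch_scalar (B b)"
    using assms(3,4) norm_bloch_vector_le by (auto simp: is_povm_def lossy_outcomes_def)
  then show ?thesis
    using Some click_prob_nonneg[OF assms(1)] by (simp add: bob_response_def)
qed

lemma sum_bob_response: "(\<Sum>ob\<in>lossy_outcomes m. bob_response \<eta> m B ob v) = 1"
  by (simp add: sum_lossy_outcomes bob_response_def)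

lemma integral_alice_response_mult_bob_response:
  assumes "norm x = 1" "is_povm m B" and "ob \<in> lossy_outcomes m"
  shows "(\<integral>v. alice_response x a v * bob_response \<eta> m B ob v \<partial>unit_ball_measure)
    = (bloch_scalar (lossy \<eta> B ob) + a * (x \<bullet> bloch_vector (lossy \<eta> B ob))) / 2"
proof (cases ob)
  case None
  have "(\<integral>v. alice_response x a v * bob_response \<eta> m B ob v \<partial>unit_ball_measure)
      = 1/2 - (\<Sum>b<m. (\<eta> * bloch_scalar (B b) + a * (x \<bullet> \<eta> *\<^sub>R bloch_vector (B b))) / 2)"
    using None
    by (simp add: bob_response_def right_diff_distrib sum_distrib_left integral_alice_response
        integral_alice_response_mult_click_prob[OF assms(1)])
  also have "\<dots> = (1 - \<eta>) / 2"
    using is_povm_bloch_sums[OF assms(2)]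
    by (simp add: sum.distrib add_divide_distrib
        flip: sum_divide_distrib sum_distrib_left inner_sum_right)
  finally show ?thesis
    using None by (simp add: lossy_def)
qed (simp add: lossy_def bob_response_def integral_alice_response_mult_click_prob[OF assms(1)])

lemma lhv_lossy_of_bloch_correlations:
  fixes Aop :: "'s \<Rightarrow> real \<Rightarrow> qmat" and dir :: "'s \<Rightarrow> real^3"
  assumes "0 \<le> \<eta>" "\<eta> \<le> mean_abs_coord"
    and dir: "\<And>s. s \<in> SA \<Longrightarrow> norm (dir s) = 1"
    and corr: "\<And>s a M. s \<in> SA \<Longrightarrow> hermitian2 M \<Longrightarrow>
      bell_corr (Aop s a) M = complex_of_real ((bloch_scalar M + a * (dir s \<bullet> bloch_vector M)) / 2)"
  shows "lhv_lossy SA Aop \<eta>"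
proof -
  have model_corr: "bell_corr (Aop s a) (lossy \<eta> B ob) = complex_of_real
      (\<integral>v. alice_response (dir s) a v * bob_response \<eta> m B ob v \<partial>unit_ball_measure)"
    if "s \<in> SA" "is_povm m B" "ob \<in> lossy_outcomes m" for s a m B ob
    using that by (simp add: corr hermitian2_lossy integral_alice_response_mult_bob_response dir)
  show ?thesis
    unfolding lhv_lossy_def
    using prob_space_unit_ball_measure bob_response_nonneg[OF assms(1,2)] sum_bob_response model_corr
    by (intro exI[of _ unit_ball_measure] exI[of _ "\<lambda>s. alice_response (dir s)"]
        exI[of _ "bob_response \<eta>"])
      (auto simp: alice_response_def sgn_real_def)
qed

theorem mainTheorem15:
  fixes \<eta> :: real
  assumes "0 \<le> \<eta>" and "\<eta> \<le> 1"
  shows "(\<eta> \<le> 1/4 \<longrightarrow> lhv_lossy {x :: real^3. norm x = 1} alice_proj \<eta>)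
       \<and> (\<eta> \<le> 1/pi \<longrightarrow> lhv_lossy {0..<2*pi} alice_xz \<eta>)"
proof (intro conjI impI)
  assume "\<eta> \<le> 1/4"
  then have "\<eta> \<le> mean_abs_coord"
    using mean_abs_coord_ge by simp
  then show "lhv_lossy {x :: real^3. norm x = 1} alice_proj \<eta>"
    by (intro lhv_lossy_of_bloch_correlations[where dir = "\<lambda>x. x"] assms(1))
      (auto simp: bell_corr_alice_proj)
next
  assume "\<eta> \<le> 1/pi"
  moreover have "1/pi \<le> 1/3"
    using pi_gt3 by (simp add: frac_le)
  ultimately have "\<eta> \<le> mean_abs_coord"
    using mean_abs_coord_ge by linarith
  then show "lhv_lossy {0..<2*pi} alice_xz \<eta>"
    by (intro lhv_lossy_of_bloch_correlations[where dir = "\<lambda>\<phi>. vector [sin \<phi>, 0, cos \<phi>]"] assms(1))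
      (auto simp: alice_xz_eq_alice_proj bell_corr_alice_proj norm_vector_sin_0_cos)
qed

end
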